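(* For any $b,c,d\in\mathbb C\setminus\{-1,-2,-3,\dots\}$, with $f$ as defined in the context: (1) $f(b,b)=1$; (2) $f(b,c)f(c,d)=f(b,d)$; (3) $\displaystyle f(b,c)=\left(\frac{c+1}{b+1}\right)f\left(\frac b2,\frac c2\right)f\left(\frac{c+1}{2},\frac{b+1}{2}\right)$.
   Context: Let $u_n=(-1)^{s_2(n)}$, where $s_2(n)$ is the sum of the binary digits of the non-negative integer $n$ (Thue–Morse sequence with values $\pm1$). For $b,c\in\mathbb C\setminus\{-1,-2,-3,\dots\}$ define $f(b,c)=\prod_{n=1}^\infty\left(\frac{n+b}{n+c}\right)^{u_n}$ (limit of partial products; this product converges for all such $b,c$). *)

theory Defs
  imports "HOL-Analysis.Analysis"
begin

fun s2 :: "nat \<Rightarrow> nat" where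
  "s2 n = (if n = 0 then 0 else n mod 2 + s2 (n div 2))"

declare s2.simps[simp del]

definition tm :: "nat \<Rightarrow> int" where
  "tm n = (-1) ^ s2 n"

definition admissible :: "complex \<Rightarrow> bool" where
  "admissible z \<longleftrightarrow> (\<forall>n::nat. n \<ge> 1 \<longrightarrow> z \<noteq> - of_nat n)"

definition tmf :: "complex \<Rightarrow> complex \<Rightarrow> complex" where
  "tmf b c = lim (\<lambda>N. \<Prod>n=1..N. ((of_nat n + b) / (of_nat n + c)) powi tm n)"

end

theory Submission
  imports Defs
begin

text \<open>Identities (1) and (2) hold factorwise for the partial products, and (3) holds exactly for
  the partial products of odd length \<open>2M + 1\<close>: since \<open>u\<^sub>2\<^sub>m = u\<^sub>m\<close> and
  \<open>u\<^sub>2\<^sub>m\<^sub>+\<^sub>1 = -u\<^sub>m\<close>, the factors with even index \<open>2m\<close> form the product for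
  \<open>f(b/2, c/2)\<close> and those with odd index \<open>2m + 1\<close> the product for
  \<open>f((c+1)/2, (b+1)/2)\<close>, the factor for \<open>n = 1\<close> being \<open>(c+1)/(b+1)\<close>. Grouping the
  factors \<open>2m\<close> and \<open>2m + 1\<close>, which carry opposite signs, gives a factor
  \<open>1 + O(|b - c|/m\<^sup>2)\<close>, so the grouped product converges absolutely; this needs no
  admissibility, as zero factors are harmless for the limit of the partial products.\<close>

lemma LIMSEQ_even_odd:
  fixes X :: "nat \<Rightarrow> 'a::topological_space"
  assumes "(\<lambda>n. X (2 * n)) \<longlonglongrightarrow> L" and "(\<lambda>n. X (2 * n + 1)) \<longlonglongrightarrow> L"
  shows "X \<longlonglongrightarrow> L"
proof (rule topological_tendstoI)
  fix S assume "open S" "L \<in> S"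
  then obtain N1 N2 where N1: "\<And>n. n \<ge> N1 \<Longrightarrow> X (2 * n) \<in> S"
    and N2: "\<And>n. n \<ge> N2 \<Longrightarrow> X (2 * n + 1) \<in> S"
    using assms unfolding tendsto_def eventually_sequentially by meson
  have "X n \<in> S" if "n \<ge> 2 * (N1 + N2)" for n
  proof (cases "even n")
    case True
    then show ?thesis using N1[of "n div 2"] that by simp
  next
    case False
    then have "n = 2 * (n div 2) + 1" by simp
    then show ?thesis using N2[of "n div 2"] that by simp
  qed
  then show "eventually (\<lambda>n. X n \<in> S) sequentially"
    unfolding eventually_sequentially by blast
qed

lemma half_divide_half: "(x / 2) / (y / 2) = x / (y :: 'a::field_char_0)"
  by simp

lemma norm_of_nat_add_ge: "real n - norm y \<le> norm (of_nat n + y :: 'a::real_normed_algebra_1)"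
  using norm_diff_ineq[of "of_nat n :: 'a" y] by simp

lemma norm_ratio_quotient_minus_1_le:
  fixes a x y :: "'a::real_normed_field"
  assumes "r > 0" and "r \<le> norm (a + y)" and "r \<le> norm (a + 1 + x)"
  shows "norm ((a + x) / (a + y) / ((a + 1 + x) / (a + 1 + y)) - 1) \<le> norm (x - y) / r\<^sup>2"
proof -
  have "a + y \<noteq> 0" "a + 1 + x \<noteq> 0" using assms by auto
  then have "(a + x) / (a + y) / ((a + 1 + x) / (a + 1 + y)) - 1
      = ((a + x) * (a + 1 + y) - (a + y) * (a + 1 + x)) / ((a + y) * (a + 1 + x))"
    by (simp add: divide_simps)
  also have "\<dots> = (x - y) / ((a + y) * (a + 1 + x))"
    by (simp add: algebra_simps)
  finally have "norm ((a + x) / (a + y) / ((a + 1 + x) / (a + 1 + y)) - 1)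
      = norm ((x - y) / ((a + y) * (a + 1 + x)))" by simp
  also have "\<dots> = norm (x - y) / (norm (a + y) * norm (a + 1 + x))"
    by (simp add: norm_divide norm_mult)
  also have "\<dots> \<le> norm (x - y) / r\<^sup>2"
    unfolding power2_eq_square using assms
    by (intro divide_left_mono mult_mono mult_pos_pos) auto
  finally show ?thesis .
qed

lemma of_nat_add_divide_of_nat_add_tendsto_1:
  "(\<lambda>n. (of_nat n + b) / (of_nat n + c)) \<longlonglongrightarrow> (1::'a::real_normed_field)"
proof (rule Lim_transform_eventually)
  have "(\<lambda>n. (1 + b * inverse (of_nat n)) / (1 + c * inverse (of_nat n))) \<longlonglongrightarrow> (1 + b * 0) / (1 + c * 0)"
    by (intro tendsto_intros lim_inverse_n) simp
  then show "(\<lambda>n. (1 + b * inverse (of_nat n)) / (1 + c * inverse (of_nat n))) \<longlonglongrightarrow> 1"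
    by simp
  show "eventually (\<lambda>n. (1 + b * inverse (of_nat n)) / (1 + c * inverse (of_nat n))
          = (of_nat n + b) / (of_nat n + c)) sequentially"
    using eventually_gt_at_top[of "0::nat"]
  proof eventually_elim
    case (elim n)
    then have "(of_nat n :: 'a) \<noteq> 0" by simp
    then have "1 + b * inverse (of_nat n) = (of_nat n + b) * inverse (of_nat n)"
      "1 + c * inverse (of_nat n) = (of_nat n + c) * inverse (of_nat n)"
      by (simp_all add: field_simps)
    with \<open>(of_nat n :: 'a) \<noteq> 0\<close> show ?case by simp
  qed
qed

lemma s2_double: "s2 (2 * m) = s2 m"
  by (cases "m = 0") (simp_all add: s2.simps[of "2 * m"] s2.simps[of 0])

lemma s2_double_plus_1: "s2 (2 * m + 1) = s2 m + 1"
  by (subst s2.simps) simp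

lemma tm_double: "tm (2 * m) = tm m"
  by (simp add: tm_def s2_double)

lemma tm_double_plus_1: "tm (2 * m + 1) = - tm m"
  unfolding tm_def s2_double_plus_1 by simp

lemma tm_eq_1_or_minus_1: "tm n = 1 \<or> tm n = -1"
  unfolding tm_def by (cases "even (s2 n)") auto

lemma tm_Suc_0: "tm (Suc 0) = -1"
  using tm_double_plus_1[of 0] by (simp add: tm_def s2.simps)

definition tm_factor :: "complex \<Rightarrow> complex \<Rightarrow> nat \<Rightarrow> complex" where
  "tm_factor b c n = ((of_nat n + b) / (of_nat n + c)) powi tm n"

definition tm_partial_prod :: "complex \<Rightarrow> complex \<Rightarrow> nat \<Rightarrow> complex" where
  "tm_partial_prod b c N = (\<Prod>n=1..N. tm_factor b c n)"

lemma tmf_eq_lim_tm_partial_prod: "tmf b c = lim (tm_partial_prod b c)"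
  unfolding tmf_def tm_partial_prod_def tm_factor_def ..

lemma tm_partial_prod_Suc:
  "tm_partial_prod b c (Suc N) = tm_partial_prod b c N * tm_factor b c (Suc N)"
  by (simp add: tm_partial_prod_def)

lemma admissible_of_nat_add_nonzero: "admissible b \<Longrightarrow> n \<ge> 1 \<Longrightarrow> of_nat n + b \<noteq> 0"
  unfolding admissible_def by (metis add.commute add_eq_0_iff)

lemma tm_partial_prod_same:
  assumes "admissible b"
  shows "tm_partial_prod b b N = 1"
  unfolding tm_partial_prod_def
  by (rule prod.neutral) (use admissible_of_nat_add_nonzero[OF assms] in \<open>simp add: tm_factor_def\<close>)

lemma tm_partial_prod_mult:
  assumes "admissible c"
  shows "tm_partial_prod b c N * tm_partial_prod c d N = tm_partial_prod b d N"
  unfolding tm_partial_prod_def prod.distrib[symmetric]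
proof (rule prod.cong[OF refl])
  fix n assume "n \<in> {1..N}"
  then have "of_nat n + c \<noteq> 0" using admissible_of_nat_add_nonzero[OF assms] by simp
  then show "tm_factor b c n * tm_factor c d n = tm_factor b d n"
    unfolding tm_factor_def power_int_mult_distrib[symmetric] by simp
qed

lemma tm_factor_double: "tm_factor b c (2 * k) = tm_factor (b / 2) (c / 2) k"
proof -
  have halves: "of_nat k + b / 2 = (of_nat (2 * k) + b) / 2" "of_nat k + c / 2 = (of_nat (2 * k) + c) / 2"
    by (simp_all add: field_simps)
  have "(of_nat k + b / 2) / (of_nat k + c / 2) = (of_nat (2 * k) + b) / (of_nat (2 * k) + c)"
    unfolding halves by (rule half_divide_half)
  then show ?thesis
    by (simp only: tm_factor_def tm_double)
qed

lemma tm_factor_double_plus_1: "tm_factor b c (2 * k + 1) = tm_factor ((c + 1) / 2) ((b + 1) / 2) k"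
proof -
  have halves: "of_nat k + (c + 1) / 2 = (of_nat (2 * k + 1) + c) / 2"
    "of_nat k + (b + 1) / 2 = (of_nat (2 * k + 1) + b) / 2"
    by (simp_all add: field_simps)
  have "(of_nat k + (c + 1) / 2) / (of_nat k + (b + 1) / 2)
      = inverse ((of_nat (2 * k + 1) + b) / (of_nat (2 * k + 1) + c))"
    unfolding halves inverse_divide by (rule half_divide_half)
  then show ?thesis
    by (simp only: tm_factor_def tm_double_plus_1 power_int_minus power_int_inverse)
qed

lemma tm_partial_prod_odd_split:
  "tm_partial_prod b c (2 * M + 1)
     = (c + 1) / (b + 1) * tm_partial_prod (b / 2) (c / 2) M * tm_partial_prod ((c + 1) / 2) ((b + 1) / 2) M"
proof (induction M)
  case 0
  show ?case by (simp add: tm_partial_prod_def tm_factor_def tm_Suc_0 power_int_minus inverse_divide add.commute)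
next
  case (Suc M)
  have "tm_partial_prod b c (2 * Suc M + 1)
      = tm_partial_prod b c (2 * M + 1) * tm_factor b c (2 * Suc M) * tm_factor b c (2 * Suc M + 1)"
    by (simp add: tm_partial_prod_Suc)
  also have "\<dots> = tm_partial_prod b c (2 * M + 1)
      * tm_factor (b / 2) (c / 2) (Suc M) * tm_factor ((c + 1) / 2) ((b + 1) / 2) (Suc M)"
    by (simp only: tm_factor_double tm_factor_double_plus_1)
  finally show ?case
    unfolding Suc.IH by (simp only: tm_partial_prod_Suc mult_ac)
qed

lemma tm_factor_tendsto_1: "tm_factor b c \<longlonglongrightarrow> 1"
proof -
  let ?R = "\<lambda>n. (of_nat n + b) / (of_nat n + c) :: complex"
  have "(\<lambda>n. ?R n - 1) \<longlonglongrightarrow> 0"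
    using of_nat_add_divide_of_nat_add_tendsto_1 by (rule LIM_zero)
  moreover have "(\<lambda>n. inverse (?R n) - 1) \<longlonglongrightarrow> 0"
    using tendsto_inverse[OF of_nat_add_divide_of_nat_add_tendsto_1] by (intro LIM_zero) simp
  ultimately have majorant: "(\<lambda>n. norm (?R n - 1) + norm (inverse (?R n) - 1)) \<longlonglongrightarrow> 0"
    by (intro tendsto_add_zero tendsto_norm_zero)
  have bound: "norm (tm_factor b c n - 1) \<le> norm (?R n - 1) + norm (inverse (?R n) - 1)" for n
    using tm_eq_1_or_minus_1[of n]
  proof
    assume "tm n = 1"
    then show ?thesis by (simp add: tm_factor_def)
  next
    assume "tm n = -1"
    then show ?thesis by (simp add: tm_factor_def power_int_minus)
  qed
  have "(\<lambda>n. tm_factor b c n - 1) \<longlonglongrightarrow> 0"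
    using always_eventually[OF allI[OF bound]] majorant by (rule Lim_null_comparison)
  then show ?thesis
    by (simp add: LIM_zero_iff)
qed

definition tm_pair_factor :: "complex \<Rightarrow> complex \<Rightarrow> nat \<Rightarrow> complex" where
  "tm_pair_factor b c m = tm_factor b c (2 * m) * tm_factor b c (2 * m + 1)"

lemma tm_pair_factor_eq:
  "tm_pair_factor b c m = ((of_nat (2 * m) + b) / (of_nat (2 * m) + c)
     / ((of_nat (2 * m) + 1 + b) / (of_nat (2 * m) + 1 + c))) powi tm m"
proof -
  have "of_nat (2 * m + 1) = (of_nat (2 * m) + 1 :: complex)"
    by simp
  then show ?thesis
    unfolding tm_pair_factor_def tm_factor_def tm_double tm_double_plus_1 power_int_minus
    by (simp only: power_int_inverse[symmetric] power_int_mult_distrib[symmetric] divide_inverse add.assoc)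
qed

lemma norm_tm_pair_factor_minus_1_le:
  assumes "norm b \<le> real m" and "norm c \<le> real m" and "m \<ge> 1"
  shows "norm (tm_pair_factor b c m - 1) \<le> norm (b - c) / (real m)\<^sup>2"
proof -
  define Q where "Q x y = (of_nat (2 * m) + x) / (of_nat (2 * m) + y)
      / ((of_nat (2 * m) + 1 + x) / (of_nat (2 * m) + 1 + y))" for x y :: complex
  have bound: "norm (Q x y - 1) \<le> norm (x - y) / (real m)\<^sup>2"
    if "norm x \<le> real m" "norm y \<le> real m" for x y
    unfolding Q_def
  proof (rule norm_ratio_quotient_minus_1_le)
    show "real m \<le> norm (of_nat (2 * m) + y)"
      using norm_of_nat_add_ge[of "2 * m" y] that by simp
    show "real m \<le> norm (of_nat (2 * m) + 1 + x)"
      using norm_of_nat_add_ge[of "2 * m + 1" x] that by (simp add: add_ac)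
  qed (use assms in simp)
  have "tm_pair_factor b c m = Q b c powi tm m"
    unfolding Q_def by (rule tm_pair_factor_eq)
  moreover have "inverse (Q b c) = Q c b"
    unfolding Q_def by (simp add: divide_inverse mult_ac)
  ultimately have "tm_pair_factor b c m = Q b c \<or> tm_pair_factor b c m = Q c b"
    using tm_eq_1_or_minus_1[of m] by (auto simp only: power_int_1_right power_int_minus)
  then show ?thesis
  proof
    assume "tm_pair_factor b c m = Q b c"
    then show ?thesis using bound[of b c] assms by simp
  next
    assume "tm_pair_factor b c m = Q c b"
    then show ?thesis using bound[of c b] assms by (metis norm_minus_commute)
  qed
qed

lemma summable_norm_tm_pair_factor_minus_1: "summable (\<lambda>m. norm (tm_pair_factor b c m - 1))"
proof (rule summable_comparison_test_ev)
  show "summable (\<lambda>m. norm (b - c) * inverse (real m ^ 2))"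
    by (intro summable_mult inverse_power_summable) simp
  obtain K :: nat where K: "norm b + norm c \<le> real K"
    using real_arch_simple by blast
  show "eventually (\<lambda>m. norm (norm (tm_pair_factor b c m - 1)) \<le> norm (b - c) * inverse (real m ^ 2))
      sequentially"
    using eventually_ge_at_top[of "K + 1"]
  proof eventually_elim
    case (elim m)
    then have "real K + 1 \<le> real m" "m \<ge> 1"
      by simp_all
    then have "norm b \<le> real m" "norm c \<le> real m" "m \<ge> 1"
      using K norm_ge_zero[of b] norm_ge_zero[of c] by linarith+
    then show ?case
      using norm_tm_pair_factor_minus_1_le by (simp add: divide_inverse)
  qed
qed

lemma tm_partial_prod_odd_pairs:
  "tm_partial_prod b c (2 * M + 1) = tm_factor b c 1 * (\<Prod>m<M. tm_pair_factor b c (Suc m))"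
proof (induction M)
  case 0
  show ?case by (simp add: tm_partial_prod_def)
next
  case (Suc M)
  have "tm_partial_prod b c (2 * Suc M + 1)
      = tm_partial_prod b c (2 * M + 1) * tm_pair_factor b c (Suc M)"
    by (simp add: tm_partial_prod_Suc tm_pair_factor_def)
  with Suc.IH show ?case
    by (simp add: mult.assoc)
qed

lemma convergent_tm_partial_prod: "convergent (tm_partial_prod b c)"
proof -
  have "convergent_prod (\<lambda>m. tm_pair_factor b c (Suc m))"
    using summable_norm_tm_pair_factor_minus_1
    by (simp add: summable_imp_abs_convergent_prod abs_convergent_prod_imp_convergent_prod)
  then have "(\<lambda>M. \<Prod>m<Suc M. tm_pair_factor b c (Suc m)) \<longlonglongrightarrow> prodinf (\<lambda>m. tm_pair_factor b c (Suc m))"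
    unfolding lessThan_Suc_atMost by (rule convergent_prod_LIMSEQ)
  then have pairs: "(\<lambda>M. \<Prod>m<M. tm_pair_factor b c (Suc m)) \<longlonglongrightarrow> prodinf (\<lambda>m. tm_pair_factor b c (Suc m))"
    by (rule LIMSEQ_imp_Suc)
  define L where "L = tm_factor b c 1 * prodinf (\<lambda>m. tm_pair_factor b c (Suc m))"
  from pairs have odd: "(\<lambda>M. tm_partial_prod b c (2 * M + 1)) \<longlonglongrightarrow> L"
    unfolding tm_partial_prod_odd_pairs L_def by (rule tendsto_mult_left)
  have "strict_mono (\<lambda>M::nat. 2 * M + 2)"
    by (rule strict_monoI) simp
  from LIMSEQ_subseq_LIMSEQ[OF tm_factor_tendsto_1 this]
  have "(\<lambda>M. tm_factor b c (2 * M + 2)) \<longlonglongrightarrow> 1"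
    unfolding o_def .
  with odd have "(\<lambda>M. tm_partial_prod b c (2 * M + 1) * tm_factor b c (2 * M + 2)) \<longlonglongrightarrow> L * 1"
    by (rule tendsto_mult)
  then have "(\<lambda>M. tm_partial_prod b c (2 * Suc M)) \<longlonglongrightarrow> L"
    by (simp add: tm_partial_prod_Suc)
  then have "(\<lambda>M. tm_partial_prod b c (2 * M)) \<longlonglongrightarrow> L"
    by (rule LIMSEQ_imp_Suc)
  with odd show ?thesis
    by (blast intro: convergentI LIMSEQ_even_odd)
qed

lemma tm_partial_prod_LIMSEQ: "tm_partial_prod b c \<longlonglongrightarrow> tmf b c"
  unfolding tmf_eq_lim_tm_partial_prod using convergent_tm_partial_prod by (rule convergent_LIMSEQ_iff[THEN iffD1])

theorem lemma2:
  fixes b c d :: complex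
  assumes "admissible b" and "admissible c" and "admissible d"
  shows "tmf b b = 1 \<and>
         tmf b c * tmf c d = tmf b d \<and>
         tmf b c = ((c + 1) / (b + 1)) * tmf (b / 2) (c / 2) * tmf ((c + 1) / 2) ((b + 1) / 2)"
proof (intro conjI)
  have "tm_partial_prod b b = (\<lambda>_. 1)"
    by (rule ext) (rule tm_partial_prod_same[OF assms(1)])
  then show "tmf b b = 1"
    unfolding tmf_eq_lim_tm_partial_prod by (simp add: limI)
next
  have "(\<lambda>N. tm_partial_prod b c N * tm_partial_prod c d N) \<longlonglongrightarrow> tmf b c * tmf c d"
    by (intro tendsto_mult tm_partial_prod_LIMSEQ)
  then have "tm_partial_prod b d \<longlonglongrightarrow> tmf b c * tmf c d"
    by (simp add: tm_partial_prod_mult[OF assms(2)])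
  with tm_partial_prod_LIMSEQ show "tmf b c * tmf c d = tmf b d"
    by (rule LIMSEQ_unique[symmetric])
next
  have "strict_mono (\<lambda>M::nat. 2 * M + 1)"
    by (rule strict_monoI) simp
  from LIMSEQ_subseq_LIMSEQ[OF tm_partial_prod_LIMSEQ this]
  have "(\<lambda>M. tm_partial_prod b c (2 * M + 1)) \<longlonglongrightarrow> tmf b c"
    unfolding o_def .
  moreover have "(\<lambda>M. tm_partial_prod b c (2 * M + 1))
      \<longlonglongrightarrow> (c + 1) / (b + 1) * tmf (b / 2) (c / 2) * tmf ((c + 1) / 2) ((b + 1) / 2)"
    unfolding tm_partial_prod_odd_split by (intro tendsto_mult tendsto_const tm_partial_prod_LIMSEQ)
  ultimately show "tmf b c = (c + 1) / (b + 1) * tmf (b / 2) (c / 2) * tmf ((c + 1) / 2) ((b + 1) / 2)"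
    by (rule LIMSEQ_unique)
qed

end
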